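(* Let $d=1$, let $F=\{\mathbf{p}_0,\ldots,\mathbf{p}_n\}\subset\mathbb{R}$ contain at least two distinct points, and let $k\ge1$. Then for every $(\lambda_0,\ldots,\lambda_n)\in\mathcal{P}_k$, for the IFS $S_i(x)=\lambda_ix+(1-\lambda_i)\mathbf{p}_i$ ($i=0,\ldots,n$), the set $X_k$ contains an open dense subset of $X$ and Lebesgue almost every $x\in X$ belongs to $X_k$.
   Context: Write $\mathcal{D}=\{0,\ldots,n\}$ and $\mathcal{P}_k=\{(\lambda_i)_{i\in\mathcal{D}}:\lambda_i\in(0,1),\ \prod_{i\in\mathcal{D}}\lambda_i^{k(n+1)^{k-1}}\ge\frac{1}{2}\}$. $X\subset\mathbb{R}$ is the unique non-empty compact set with $X=\bigcup_{i\in\mathcal{D}}S_i(X)$; "open dense subset of $X$" refers to the relative topology of $X$. The coding map is $\pi(\mathbf{a})=\lim_{j\to\infty}(S_{a_1}\circ\cdots\circ S_{a_j})(0)$. For $\mathbf{b}\in\mathcal{D}^k$, $\mathrm{freq}_{\mathbf{b}}(\mathbf{a})=\lim_{m\to\infty}\frac1m\#\{1\le j\le m:a_j\cdots a_{j+k-1}=\mathbf{b}\}$; $\mathbf{a}$ is $k$-simply normal if this equals $(n+1)^{-k}$ for all $\mathbf{b}\in\mathcal{D}^k$. $X_k$ is the set of $x\in X$ having a $k$-simply normal $\mathbf{a}$ with $\pi(\mathbf{a})=x$. *)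

theory Defs
  imports "HOL-Analysis.Analysis"
begin

definition ifs_map :: "(nat \<Rightarrow> real) \<Rightarrow> (nat \<Rightarrow> real) \<Rightarrow> nat \<Rightarrow> real \<Rightarrow> real" where
  "ifs_map lam p i x = lam i * x + (1 - lam i) * p i"

definition comp_prefix :: "(nat \<Rightarrow> real \<Rightarrow> real) \<Rightarrow> (nat \<Rightarrow> nat) \<Rightarrow> nat \<Rightarrow> real \<Rightarrow> real" where
  "comp_prefix S a j = foldr (\<lambda>i g. S (a i) \<circ> g) [0..<j] id"

definition occ_count :: "(nat \<Rightarrow> nat) \<Rightarrow> nat list \<Rightarrow> nat \<Rightarrow> nat" where
  "occ_count a b m = card {j. j < m \<and> map a [j..<j + length b] = b}"

definition k_simply_normal :: "nat \<Rightarrow> nat \<Rightarrow> (nat \<Rightarrow> nat) \<Rightarrow> bool" where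
  "k_simply_normal n k a \<longleftrightarrow>
     (\<forall>b. length b = k \<and> set b \<subseteq> {0..n} \<longrightarrow>
        ((\<lambda>m. real (occ_count a b m) / real m) \<longlonglongrightarrow> 1 / real (n + 1) ^ k))"

text \<open>X_k: points with a k-simply normal coding a in D^N with pi(a) = x.\<close>
definition Xk_set :: "nat \<Rightarrow> nat \<Rightarrow> (nat \<Rightarrow> real \<Rightarrow> real) \<Rightarrow> real set \<Rightarrow> real set" where
  "Xk_set n k S X = {x \<in> X. \<exists>a. (\<forall>j. a j \<in> {0..n}) \<and> k_simply_normal n k a \<and>
                          ((\<lambda>j. comp_prefix S a j 0) \<longlonglongrightarrow> x)}"

end

theory Submission
  imports Defs
begin

text \<open>Let \<open>[a, b]\<close> be the convex hull of the points \<open>p i\<close>. The hypothesis on the product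
  forces \<open>lam i + lam j > 1\<close> for \<open>i \<noteq> j\<close>, so the maps towards \<open>a\<close> and \<open>b\<close> already cover
  \<open>[a, b]\<close> and the attractor is \<open>X = [a, b]\<close>.

  Concatenating the \<open>k\<close>-digit expansions of \<open>0, \<dots>, (n + 1) ^ k - 1\<close> gives a cyclic word in
  which every word of length \<open>k\<close> occurs \<open>k\<close> times among the cyclic windows. This word and its
  rotation by one letter are two blocks containing every letter \<open>k (n + 1) ^ (k - 1)\<close> times,
  so their compositions have the same ratio, at least \<open>1/2\<close>, and they have distinct fixed points.
  Two contractions of ratio at least \<open>1/2\<close> cover the interval between their fixed points, so
  every point there is coded by a concatenation of the two blocks; since the blocks agree on
  their first \<open>k - 1\<close> letters, such a concatenation counts windows like the cyclic word and is
  \<open>k\<close>-simply normal. The images of the open interval under all compositions form an open dense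
  set \<open>G\<close> of normal points. Finally \<open>[a, b] - G\<close> has density at most its own proportion in
  every cylinder, but it misses the middle of the interval between the fixed points, so a
  Vitali covering argument shows that it is null.\<close>

section \<open>Affine iterated function systems on the line\<close>

locale ifs =
  fixes n :: nat and p lam :: "nat \<Rightarrow> real"
  assumes lam_bounds: "\<And>i. i \<le> n \<Longrightarrow> 0 < lam i \<and> lam i < 1"
begin

definition S :: "nat \<Rightarrow> real \<Rightarrow> real" where "S = ifs_map lam p"

definition Sw :: "nat list \<Rightarrow> real \<Rightarrow> real" where "Sw w = foldr (\<lambda>i g. S i \<circ> g) w id"

definition ratio :: "nat list \<Rightarrow> real" where "ratio w = prod_list (map lam w)"

lemma S_eq: "S i x = lam i * x + (1 - lam i) * p i"
  by (simp add: S_def ifs_map_def)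

lemma Sw_Nil [simp]: "Sw [] = id"
  by (simp add: Sw_def)

lemma Sw_Cons [simp]: "Sw (i # w) = S i \<circ> Sw w"
  by (simp add: Sw_def)

lemma Sw_append: "Sw (u @ v) = Sw u \<circ> Sw v"
  by (induct u) auto

lemma ratio_Nil [simp]: "ratio [] = 1"
  by (simp add: ratio_def)

lemma ratio_Cons [simp]: "ratio (i # w) = lam i * ratio w"
  by (simp add: ratio_def)

lemma comp_prefix_eq_Sw: "comp_prefix S c j = Sw (map c [0..<j])"
  unfolding comp_prefix_def Sw_def by (simp add: foldr_map o_def)

lemma Sw_affine: "Sw w x = ratio w * x + Sw w 0"
proof (induct w arbitrary: x)
  case (Cons i w)
  show ?case using Cons[of x] by (simp add: S_eq algebra_simps)
qed simp

lemma Sw_eq_affine: "Sw w = (\<lambda>x. ratio w * x + Sw w 0)"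
  using Sw_affine by blast

lemma Sw_diff: "Sw w x - Sw w y = ratio w * (x - y)"
  using Sw_affine[of w x] Sw_affine[of w y] by (simp add: algebra_simps)

lemma Sw_fixpoint_form: "Sw w f = f \<Longrightarrow> Sw w x = f + ratio w * (x - f)"
  using Sw_diff[of w x f] by (simp add: algebra_simps)

lemma ratio_pos: "set w \<subseteq> {0..n} \<Longrightarrow> 0 < ratio w"
  by (induct w) (auto simp: lam_bounds)

definition lam_max :: real where "lam_max = Max (lam ` {0..n})"

lemma lam_le_lam_max: "i \<le> n \<Longrightarrow> lam i \<le> lam_max"
  unfolding lam_max_def by (rule Max_ge) auto

lemma lam_max_bounds: "0 < lam_max" "lam_max < 1"
proof -
  show "0 < lam_max" using lam_le_lam_max[of 0] lam_bounds[of 0] by simp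
  show "lam_max < 1" unfolding lam_max_def using lam_bounds by (subst Max_less_iff) auto
qed

lemma ratio_le_lam_max_power: "set w \<subseteq> {0..n} \<Longrightarrow> ratio w \<le> lam_max ^ length w"
proof (induct w)
  case (Cons i w)
  then show ?case
    using lam_le_lam_max[of i] lam_bounds[of i] ratio_pos[of w] by (simp add: mult_mono')
qed simp

lemma ratio_less_1:
  assumes "set w \<subseteq> {0..n}" "w \<noteq> []"
  shows "ratio w < 1"
proof -
  have "lam_max ^ length w < 1"
    using lam_max_bounds assms(2) by (simp add: power_less_one_iff)
  then show ?thesis using ratio_le_lam_max_power[OF assms(1)] by linarith
qed

lemma lam_sum_gt_1:
  assumes "1 / 2 \<le> (\<Prod>i\<in>{0..n}. lam i ^ E)" "1 \<le> E" "i \<le> n" "j \<le> n" "i \<noteq> j"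
  shows "1 < lam i + lam j"
proof -
  have l: "0 < lam i'" "lam i' < 1" if "i' \<le> n" for i' using lam_bounds that by auto
  have "(\<Prod>i\<in>{0..n}. lam i ^ E) = lam i ^ E * (lam j ^ E * (\<Prod>i\<in>{0..n} - {i} - {j}. lam i ^ E))"
    using assms(3-5) by (simp add: prod.remove[of _ i] prod.remove[of _ j])
  also have "\<dots> \<le> lam i ^ E * (lam j ^ E * 1)"
    using l assms(3,4) by (intro mult_left_mono prod_le_1) (auto intro: power_le_one less_imp_le)
  also have "\<dots> \<le> lam i * lam j"
    using l[OF assms(3)] l[OF assms(4)] power_decreasing[OF assms(2), of "lam i"]
      power_decreasing[OF assms(2), of "lam j"]
    by (auto intro!: mult_mono)
  finally have "1 / 2 \<le> lam i * lam j" using assms(1) by linarith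
  then have "2 \<le> (lam i + lam j)\<^sup>2"
    using sum_squares_ge_zero[of "lam i - lam j" 0] by (simp add: power2_eq_square algebra_simps)
  then show ?thesis
    using l[OF assms(3)] l[OF assms(4)] by (smt (verit) power2_eq_square mult_le_one)
qed

lemma Sw_fixpoint_unique:
  assumes "set w \<subseteq> {0..n}" "w \<noteq> []" "Sw w x = x" "Sw w y = y"
  shows "x = y"
proof -
  have "(1 - ratio w) * (x - y) = 0"
    using Sw_diff[of w x y] assms(3,4) by (simp add: algebra_simps)
  then show ?thesis using ratio_less_1[OF assms(1,2)] by simp
qed

lemma Sw_mem_interval:
  assumes "set w \<subseteq> {0..n}" "\<And>i. i \<le> n \<Longrightarrow> p i \<in> {A..B}" "z \<in> {A..B}"
  shows "Sw w z \<in> {A..B}"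
  using assms(1)
proof (induct w)
  case (Cons i w)
  then have "i \<le> n" "Sw w z \<in> {A..B}" by auto
  then have "lam i *\<^sub>R Sw w z + (1 - lam i) *\<^sub>R p i \<in> {A..B}"
    using lam_bounds[of i] assms(2)[of i] by (intro convexD[OF convex_real_interval(5)]) auto
  then show ?case by (simp add: S_eq)
qed (use assms in simp)

lemma Sw_greater:
  assumes "set w \<subseteq> {0..n}" "\<And>i. i \<le> n \<Longrightarrow> p i \<in> {A..B}" "z \<in> {A..B}"
    and "\<exists>i\<in>set w. A < p i"
  shows "A < Sw w z"
  using assms(1,4)
proof (induct w)
  case (Cons i w)
  then have i: "i \<le> n" and l: "0 < lam i" "lam i < 1" using lam_bounds by auto
  have "A \<le> Sw w z" "A \<le> p i" using Sw_mem_interval[of w] Cons.prems assms(2,3) i by auto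
  moreover have "A < p i \<or> A < Sw w z" using Cons by auto
  ultimately have "lam i * A + (1 - lam i) * A < lam i * Sw w z + (1 - lam i) * p i"
    using l by (auto intro: add_less_le_mono add_le_less_mono mult_left_mono)
  then show ?case by (simp add: S_eq algebra_simps)
qed simp

definition a :: real where "a = Min (p ` {0..n})"

definition b :: real where "b = Max (p ` {0..n})"

lemma p_mem_ab: "i \<le> n \<Longrightarrow> p i \<in> {a..b}"
  unfolding a_def b_def by (auto intro: Min_le Max_ge)

definition i0 :: nat where "i0 = (SOME i. i \<le> n \<and> p i = a)"

definition i1 :: nat where "i1 = (SOME i. i \<le> n \<and> p i = b)"

lemma i0: "i0 \<le> n" "p i0 = a"
proof -
  have "a \<in> p ` {0..n}" unfolding a_def by (rule Min_in) auto
  then have "\<exists>i. i \<le> n \<and> p i = a" by auto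
  then show "i0 \<le> n" "p i0 = a" unfolding i0_def by (metis (mono_tags, lifting) someI_ex)+
qed

lemma i1: "i1 \<le> n" "p i1 = b"
proof -
  have "b \<in> p ` {0..n}" unfolding b_def by (rule Max_in) auto
  then have "\<exists>i. i \<le> n \<and> p i = b" by auto
  then show "i1 \<le> n" "p i1 = b" unfolding i1_def by (metis (mono_tags, lifting) someI_ex)+
qed

lemma Sw_mem_ab: "set w \<subseteq> {0..n} \<Longrightarrow> z \<in> {a..b} \<Longrightarrow> Sw w z \<in> {a..b}"
  using Sw_mem_interval p_mem_ab by blast

lemma Sw_fixpoint_mem_ab:
  assumes "set w \<subseteq> {0..n}" "w \<noteq> []" "Sw w f = f"
  shows "f \<in> {a..b}"
proof -
  have r: "ratio w < 1" using ratio_less_1[OF assms(1,2)] .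
  have "a \<le> b" using p_mem_ab[of 0] by simp
  then have "Sw w a \<in> {a..b}" "Sw w b \<in> {a..b}" using Sw_mem_ab[OF assms(1)] by auto
  moreover have "Sw w a = f + ratio w * (a - f)" "Sw w b = f + ratio w * (b - f)"
    using Sw_fixpoint_form[OF assms(3)] by auto
  ultimately have "(1 - ratio w) * (a - f) \<le> 0" "0 \<le> (1 - ratio w) * (b - f)"
    by (auto simp: algebra_simps)
  then show ?thesis using r by (simp add: mult_le_0_iff zero_le_mult_iff)
qed

lemma invariant_compact_subset_ab:
  assumes "compact X" "X = (\<Union>i\<in>{0..n}. S i ` X)"
  shows "X \<subseteq> {a..b}"
proof (cases "X = {}")
  case False
  obtain s where s: "s \<in> X" "\<And>t. t \<in> X \<Longrightarrow> t \<le> s"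
    using compact_attains_sup[OF assms(1) False] by blast
  obtain s' where s': "s' \<in> X" "\<And>t. t \<in> X \<Longrightarrow> s' \<le> t"
    using compact_attains_inf[OF assms(1) False] by blast
  have "s \<in> (\<Union>i\<in>{0..n}. S i ` X)" "s' \<in> (\<Union>i\<in>{0..n}. S i ` X)"
    using s(1) s'(1) by (simp_all only: assms(2)[symmetric])
  then obtain i y i' y' where iy: "i \<le> n" "y \<in> X" "s = S i y"
    and iy': "i' \<le> n" "y' \<in> X" "s' = S i' y'" by auto
  have "(1 - lam i) * s \<le> (1 - lam i) * p i"
    using s(2)[OF iy(2)] lam_bounds[OF iy(1)] iy(3) mult_left_mono[of y s "lam i"]
    by (simp add: S_eq algebra_simps)
  then have "s \<le> b" using lam_bounds[OF iy(1)] p_mem_ab[OF iy(1)] by simp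
  moreover have "(1 - lam i') * p i' \<le> (1 - lam i') * s'"
    using s'(2)[OF iy'(2)] lam_bounds[OF iy'(1)] iy'(3) mult_left_mono[of s' y' "lam i'"]
    by (simp add: S_eq algebra_simps)
  then have "a \<le> s'" using lam_bounds[OF iy'(1)] p_mem_ab[OF iy'(1)] by simp
  ultimately show ?thesis using s(2) s'(2) by force
qed simp

definition cyl :: "nat list \<Rightarrow> real set" where "cyl u = Sw u ` {a..b}"

lemma cyl_eq_interval: "set u \<subseteq> {0..n} \<Longrightarrow> cyl u = {Sw u a..Sw u b}"
  unfolding cyl_def
  by (subst (1 2 3) Sw_eq_affine) (simp add: image_affinity_atLeastAtMost ratio_pos less_imp_le)

lemma cyl_subset_ball:
  assumes "set u \<subseteq> {0..n}" "x \<in> cyl u" "ratio u * (b - a) < r"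
  shows "cyl u \<subseteq> ball x r"
proof
  fix y assume "y \<in> cyl u"
  then have "\<bar>x - y\<bar> \<le> Sw u b - Sw u a"
    using assms(2) unfolding cyl_eq_interval[OF assms(1)] by auto
  then show "y \<in> ball x r" using assms(3) Sw_diff[of u b a] by (simp add: dist_real_def)
qed

lemma continuous_on_Sw: "continuous_on A (Sw w)"
  by (subst Sw_eq_affine) (intro continuous_intros)

lemma measure_Sw_image:
  "set u \<subseteq> {0..n} \<Longrightarrow> measure lebesgue (Sw u ` T) = ratio u * measure lebesgue T"
  by (subst Sw_eq_affine)
    (use measure_lebesgue_affine[of "ratio u" "Sw u 0" T] ratio_pos[of u] in simp)

lemma cyl_eq_cball: "set u \<subseteq> {0..n} \<Longrightarrow> cyl u = cball (Sw u ((a + b) / 2)) (ratio u * (b - a) / 2)"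
proof -
  have "Sw u ((a + b) / 2) - ratio u * (b - a) / 2 = Sw u a"
    "Sw u ((a + b) / 2) + ratio u * (b - a) / 2 = Sw u b"
    using Sw_affine[of u a] Sw_affine[of u b] Sw_affine[of u "(a + b) / 2"]
      by (simp_all add: field_simps)
  moreover assume "set u \<subseteq> {0..n}"
  ultimately show ?thesis by (simp add: cyl_eq_interval cball_eq_atLeastAtMost)
qed

end

locale ifs_nonconstant = ifs +
  assumes p_not_constant: "\<exists>i\<in>{0..n}. \<exists>j\<in>{0..n}. p i \<noteq> p j"
begin

lemma a_less_b: "a < b"
proof -
  obtain i j where "i \<le> n" "j \<le> n" "p i \<noteq> p j" using p_not_constant by auto
  then show ?thesis using p_mem_ab[of i] p_mem_ab[of j] by fastforce
qed

lemma i0_ne_i1: "i0 \<noteq> i1"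
  using i0 i1 a_less_b by auto

end

locale ifs_overlap = ifs_nonconstant +
  assumes overlap: "\<And>i j. i \<le> n \<Longrightarrow> j \<le> n \<Longrightarrow> i \<noteq> j \<Longrightarrow> 1 < lam i + lam j"
begin

lemma ab_covered: "x \<in> {a..b} \<Longrightarrow> \<exists>i\<le>n. \<exists>y\<in>{a..b}. x = S i y"
proof -
  assume x: "x \<in> {a..b}"
  have l0: "0 < lam i0" "lam i0 < 1" and l1: "0 < lam i1" "lam i1 < 1"
    using lam_bounds i0 i1 by auto
  show ?thesis
  proof (cases "x \<le> a + lam i0 * (b - a)")
    case True
    define y where "y = a + (x - a) / lam i0"
    have "y \<in> {a..b}" "x = S i0 y"
      using True x l0 by (auto simp: y_def S_eq i0 field_simps)
    then show ?thesis using i0 by blast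
  next
    case False
    define y where "y = b + (x - b) / lam i1"
    have "(b - a) * (1 - lam i0) < (b - a) * lam i1"
      using overlap[OF i0(1) i1(1) i0_ne_i1] a_less_b by (intro mult_strict_left_mono) auto
    then have "y \<in> {a..b}" "x = S i1 y"
      using False x l1 by (auto simp: y_def S_eq i1 field_simps)
    then show ?thesis using i1 by blast
  qed
qed

lemma exists_cyl_of_length: "x \<in> {a..b} \<Longrightarrow> \<exists>u. length u = m \<and> set u \<subseteq> {0..n} \<and> x \<in> cyl u"
proof (induct m arbitrary: x)
  case 0
  then show ?case by (auto simp: cyl_def)
next
  case (Suc m)
  obtain i y where iy: "i \<le> n" "y \<in> {a..b}" "x = S i y" using ab_covered Suc.prems by blast
  obtain u where u: "length u = m" "set u \<subseteq> {0..n}" "y \<in> cyl u" using Suc.hyps[OF iy(2)] by blast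
  show ?case using iy u by (intro exI[of _ "i # u"]) (auto simp: cyl_def)
qed

lemma exists_small_cyl:
  assumes "x \<in> {a..b}" "0 < r"
  obtains u where "set u \<subseteq> {0..n}" "x \<in> cyl u" "ratio u * (b - a) < r"
proof -
  obtain m where m: "lam_max ^ m < r / (b - a)"
    using real_arch_pow_inv[of "r / (b - a)" lam_max] assms(2) a_less_b lam_max_bounds by auto
  obtain u where u: "length u = m" "set u \<subseteq> {0..n}" "x \<in> cyl u"
    using exists_cyl_of_length[OF assms(1)] by blast
  have "ratio u * (b - a) \<le> lam_max ^ m * (b - a)"
    using ratio_le_lam_max_power[OF u(2)] u(1) a_less_b by (intro mult_right_mono) auto
  also have "\<dots> < r" using m a_less_b by (simp add: field_simps)
  finally show ?thesis using that u by blast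
qed

lemma ab_subset_closure:
  assumes "\<And>u. set u \<subseteq> {0..n} \<Longrightarrow> cyl u \<inter> Y \<noteq> {}"
  shows "{a..b} \<subseteq> closure Y"
proof
  fix x assume x: "x \<in> {a..b}"
  show "x \<in> closure Y"
  proof (rule closure_approachable[THEN iffD2], intro allI impI)
    fix r :: real assume "0 < r"
    then obtain u where u: "set u \<subseteq> {0..n}" "x \<in> cyl u" "ratio u * (b - a) < r"
      using exists_small_cyl[OF x] by blast
    then obtain y where "y \<in> cyl u" "y \<in> Y" using assms by blast
    moreover from this(1) have "dist x y < r" using cyl_subset_ball[OF u] by auto
    ultimately show "\<exists>y\<in>Y. dist y x < r" by (auto simp: dist_commute)
  qed
qed

lemma attractor_eq_ab:
  assumes "compact X" "X \<noteq> {}" "X = (\<Union>i\<in>{0..n}. S i ` X)"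
  shows "X = {a..b}"
proof
  show "X \<subseteq> {a..b}" using invariant_compact_subset_ab[OF assms(1,3)] .
  then obtain z where z: "z \<in> X" "z \<in> {a..b}" using assms(2) by blast
  have Sw_X: "Sw u z \<in> X" if "set u \<subseteq> {0..n}" for u
    using that
  proof (induct u)
    case (Cons i u)
    then have "S i (Sw u z) \<in> (\<Union>i\<in>{0..n}. S i ` X)" by auto
    then show ?case by (simp only: Sw_Cons o_apply assms(3)[symmetric])
  qed (simp add: z)
  have "{a..b} \<subseteq> closure X"
    by (rule ab_subset_closure) (use Sw_X z in \<open>force simp: cyl_def\<close>)
  then show "{a..b} \<subseteq> X" using assms(1) by (simp add: compact_imp_closed closure_closed)
qed

end

section \<open>A cyclic word with equidistributed windows\<close>

definition digit :: "nat \<Rightarrow> nat \<Rightarrow> nat \<Rightarrow> nat" where "digit q t i = t div q ^ i mod q"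

lemma digit_less: "0 < q \<Longrightarrow> digit q t i < q"
  by (simp add: digit_def)

lemma digit_shift: "digit q t (h + j) = digit q (t div q ^ h) j"
  by (simp add: digit_def power_add div_mult2_eq)

lemma digit_mod_power:
  assumes "0 < q" "j < k"
  shows "digit q (t mod q ^ k) j = digit q t j"
proof -
  have "q ^ k = q ^ j * q ^ (k - j)" and dvd: "q dvd q ^ (k - j)"
    using assms(2) by (simp_all add: power_add[symmetric])
  then have "t mod q ^ k div q ^ j = t div q ^ j mod q ^ (k - j)"
    using assms(1) by (simp add: mod_mult2_eq add.commute)
  then show ?thesis by (simp add: digit_def mod_mod_cancel[OF dvd])
qed

lemma mod_power_eq_if_digits_eq:
  fixes x y q m :: nat
  assumes "\<And>j. j < m \<Longrightarrow> digit q x j = digit q y j"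
  shows "x mod q ^ m = y mod q ^ m"
  using assms
proof (induct m)
  case (Suc m)
  have "x mod q ^ Suc m = q ^ m * digit q x m + x mod q ^ m"
    by (simp only: power_Suc2 mod_mult2_eq digit_def)
  also have "\<dots> = q ^ m * digit q y m + y mod q ^ m" using Suc by auto
  also have "\<dots> = y mod q ^ Suc m"
    by (simp only: power_Suc2 mod_mult2_eq digit_def)
  finally show ?case .
qed simp

lemma Suc_mod_cancel:
  fixes t s M :: nat
  assumes "Suc t mod M = Suc s mod M"
  shows "t mod M = s mod M"
proof (cases M)
  case (Suc M')
  have "x mod M = (Suc x mod M + M') mod M" for x
  proof -
    have "x mod M = (Suc x + M') mod M" using Suc by (metis add_Suc_right add_Suc mod_add_self2)
    then show ?thesis by (simp only: mod_add_left_eq)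
  qed
  then show ?thesis using assms by metis
qed (use assms in simp)

lemma eq_if_high_digits_and_succ_low_digits_eq:
  fixes q k h t s :: nat
  assumes "0 < q" "h \<le> k" "t < q ^ k" "s < q ^ k"
    and high: "\<And>j. j < k - h \<Longrightarrow> digit q t (h + j) = digit q s (h + j)"
    and low: "\<And>j. j < h \<Longrightarrow> digit q (Suc t) j = digit q (Suc s) j"
  shows "t = s"
proof -
  have pow: "q ^ k = q ^ h * q ^ (k - h)" using assms(2) by (simp add: power_add[symmetric])
  have "t div q ^ h mod q ^ (k - h) = s div q ^ h mod q ^ (k - h)"
    by (rule mod_power_eq_if_digits_eq) (use high in \<open>simp add: digit_shift\<close>)
  moreover have "t div q ^ h < q ^ (k - h)" "s div q ^ h < q ^ (k - h)"
    using assms(1,3,4) pow by (auto simp: div_less_iff_less_mult mult.commute)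
  ultimately have "t div q ^ h = s div q ^ h" by simp
  moreover have "t mod q ^ h = s mod q ^ h"
    by (rule Suc_mod_cancel, rule mod_power_eq_if_digits_eq) (use low in simp)
  ultimately show "t = s" by (metis div_mult_mod_eq)
qed

lemma card_less_mult_by_residue:
  fixes M K :: nat
  assumes K: "0 < K"
  shows "card {r. r < M * K \<and> P r} = (\<Sum>h<K. card {t. t < M \<and> P (t * K + h)})"
proof -
  let ?A = "SIGMA h:{..<K}. {t. t < M \<and> P (t * K + h)}"
  have inj: "inj_on (\<lambda>(h, t). t * K + h) ?A"
  proof (rule inj_onI, clarsimp)
    fix h t h' t'
    assume "h < K" "h' < K" "t * K + h = t' * K + h'"
    moreover have "(t * K + h) div K = t" "(t * K + h) mod K = h"
      "(t' * K + h') div K = t'" "(t' * K + h') mod K = h'"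
      using \<open>h < K\<close> \<open>h' < K\<close> by auto
    ultimately show "h = h' \<and> t = t'" by metis
  qed
  have "(\<lambda>(h, t). t * K + h) ` ?A = {r. r < M * K \<and> P r}"
  proof (rule set_eqI, rule iffI)
    fix r assume "r \<in> (\<lambda>(h, t). t * K + h) ` ?A"
    then obtain h t where ht: "h < K" "t < M" "P (t * K + h)" "r = t * K + h" by auto
    have "t * K + h < (t + 1) * K" using \<open>h < K\<close> by simp
    also have "\<dots> \<le> M * K" using \<open>t < M\<close> by (intro mult_right_mono) auto
    finally show "r \<in> {r. r < M * K \<and> P r}" using ht by auto
  next
    fix r assume r: "r \<in> {r. r < M * K \<and> P r}"
    then have "r div K < M" using K by (simp add: div_less_iff_less_mult)
    moreover have "r = r div K * K + r mod K" by simp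
    ultimately show "r \<in> (\<lambda>(h, t). t * K + h) ` ?A"
      using r K by (intro image_eqI[of _ _ "(r mod K, r div K)"]) auto
  qed
  then have "card {r. r < M * K \<and> P r} = card ?A"
    using card_image[OF inj] by simp
  also have "\<dots> = (\<Sum>h<K. card {t. t < M \<and> P (t * K + h)})"
    by (rule card_SigmaI) auto
  finally show ?thesis .
qed

lemma bij_betw_Collect_pred:
  assumes f: "bij_betw f A B"
  shows "bij_betw f {x \<in> A. P (f x)} {y \<in> B. P y}"
proof -
  have "f ` {x \<in> A. P (f x)} = {y \<in> B. P y}"
    using bij_betw_imp_surj_on[OF f] by blast
  moreover have "inj_on f {x \<in> A. P (f x)}"
    by (rule inj_on_subset[OF bij_betw_imp_inj_on[OF f]]) auto
  ultimately show ?thesis by (simp add: bij_betw_def)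
qed

locale digit_cycle =
  fixes q k :: nat and \<sigma> :: "nat \<Rightarrow> nat"
  assumes q_ge_2: "2 \<le> q" and k_ge_1: "1 \<le> k" and \<sigma>_bij: "bij_betw \<sigma> {0..<q} {0..<q}"
begin

definition N :: nat where "N = q ^ k"

definition L :: nat where "L = k * N"

text \<open>The cyclic word of length \<open>L\<close> obtained by writing down the \<open>k\<close>-digit base-\<open>q\<close>
  expansions of \<open>0, 1, \<dots>, N - 1\<close>, least significant digit first, and relabelling the digits
  by \<open>\<sigma>\<close>. Each word of length \<open>k\<close> occurs exactly \<open>k\<close> times among its cyclic windows: the window
  starting at digit \<open>h\<close> of block \<open>t\<close> determines \<open>t\<close>.\<close>

definition cyc :: "nat \<Rightarrow> nat" where "cyc r = \<sigma> (digit q (r div k) (r mod k))"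

definition cyc_rot :: "nat \<Rightarrow> nat" where "cyc_rot r = cyc ((r + 1) mod L)"

definition window :: "(nat \<Rightarrow> nat) \<Rightarrow> nat \<Rightarrow> nat list" where
  "window f \<rho> = map (\<lambda>i. f ((\<rho> + i) mod L)) [0..<k]"

definition words :: "nat list set" where "words = {xs. set xs \<subseteq> {0..<q} \<and> length xs = k}"

lemma N_pos: "0 < N"
  using q_ge_2 by (simp add: N_def)

lemma L_pos: "0 < L"
  using q_ge_2 k_ge_1 by (simp add: L_def N_def)

lemma k_less_L: "k < L"
proof -
  have "q ^ 1 \<le> q ^ k" using q_ge_2 k_ge_1 by (intro power_increasing) auto
  then have "k * 1 < k * N" using q_ge_2 k_ge_1 by (simp add: N_def)
  then show ?thesis by (simp add: L_def)
qed

lemma \<sigma>_less: "x < q \<Longrightarrow> \<sigma> x < q"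
  using \<sigma>_bij by (auto simp: bij_betw_def)

lemma \<sigma>_inj: "x < q \<Longrightarrow> y < q \<Longrightarrow> \<sigma> x = \<sigma> y \<Longrightarrow> x = y"
  using \<sigma>_bij by (auto simp: bij_betw_def inj_on_def)

lemma cyc_less: "cyc r < q"
  using q_ge_2 by (simp add: cyc_def \<sigma>_less digit_less)

lemma cyc_rot_less: "cyc_rot r < q"
  by (simp add: cyc_rot_def cyc_less)

lemma cyc_block: "j < k \<Longrightarrow> cyc ((s * k + j) mod L) = \<sigma> (digit q s j)"
proof -
  assume j: "j < k"
  have "s mod N * k + j < Suc (s mod N) * k" using j by simp
  also have "\<dots> \<le> N * k" using N_pos by (intro mult_le_mono1) (simp add: Suc_le_eq)
  finally have "s mod N * k + j < L" by (simp add: L_def mult.commute)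
  moreover have "(s * k + j) mod L = s mod N * k + j"
    using j by (simp add: L_def mod_mult2_eq mult.commute)
  ultimately show ?thesis
    using j q_ge_2 by (simp add: cyc_def N_def digit_mod_power)
qed

lemma cyc_initial: "r + 1 < k \<Longrightarrow> cyc r = \<sigma> 0"
  by (simp add: cyc_def digit_def)

lemma cyc_rot_initial: "r + 1 < k \<Longrightarrow> cyc_rot r = \<sigma> 0"
  using k_less_L by (simp add: cyc_rot_def cyc_def digit_def)

lemma window_nth: "i < k \<Longrightarrow> window f \<rho> ! i = f ((\<rho> + i) mod L)"
  by (simp add: window_def)

lemma window_mem_words: "(\<And>r. f r < q) \<Longrightarrow> window f \<rho> \<in> words"
  by (auto simp: words_def window_def)

lemma card_words: "card words = N"
  unfolding words_def N_def by (simp add: card_lists_length_eq)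

lemma window_block_nth:
  assumes "i < k" "h < k"
  shows "window cyc (t * k + h) ! i =
    \<sigma> (if h + i < k then digit q t (h + i) else digit q (Suc t) (h + i - k))"
proof (cases "h + i < k")
  case True
  then show ?thesis
    using assms cyc_block[of "h + i" t] by (simp add: window_nth add.assoc)
next
  case False
  have "t * k + h + i = Suc t * k + (h + i - k)" using False by simp
  then have "window cyc (t * k + h) ! i = cyc ((Suc t * k + (h + i - k)) mod L)"
    using window_nth[OF assms(1), of cyc] by (simp only: add.assoc)
  then show ?thesis
    using False assms cyc_block[of "h + i - k" "Suc t"] by simp
qed

lemma window_inj: "h < k \<Longrightarrow> inj_on (\<lambda>t. window cyc (t * k + h)) {0..<N}"
proof (rule inj_onI)
  fix t s assume h: "h < k" and ts: "t \<in> {0..<N}" "s \<in> {0..<N}"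
    and eq: "window cyc (t * k + h) = window cyc (s * k + h)"
  have q: "0 < q" using q_ge_2 by simp
  have nth: "window cyc (t * k + h) ! i = window cyc (s * k + h) ! i" for i
    using eq by simp
  show "t = s"
  proof (rule eq_if_high_digits_and_succ_low_digits_eq[OF q less_imp_le[OF h]])
    show "t < q ^ k" "s < q ^ k" using ts by (auto simp: N_def)
    fix j
    show "digit q t (h + j) = digit q s (h + j)" if "j < k - h"
    proof -
      have "h + j < k" "j < k" using that h by auto
      then show ?thesis
        using nth[of j] h window_block_nth[of j h] \<sigma>_inj[OF digit_less[OF q] digit_less[OF q]]
        by auto
    qed
    show "digit q (Suc t) j = digit q (Suc s) j" if "j < h"
    proof -
      have "k - h + j < k" "\<not> h + (k - h + j) < k" "h + (k - h + j) - k = j" using that h by auto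
      then show ?thesis
        using nth[of "k - h + j"] h window_block_nth[of "k - h + j" h]
          \<sigma>_inj[OF digit_less[OF q] digit_less[OF q]]
        by auto
    qed
  qed
qed

lemma window_bij: "h < k \<Longrightarrow> bij_betw (\<lambda>t. window cyc (t * k + h)) {0..<N} words"
proof -
  assume h: "h < k"
  have "(\<lambda>t. window cyc (t * k + h)) ` {0..<N} \<subseteq> words"
    using window_mem_words cyc_less by blast
  moreover have "card ((\<lambda>t. window cyc (t * k + h)) ` {0..<N}) = card words"
    using card_image[OF window_inj[OF h]] card_words by simp
  ultimately have "(\<lambda>t. window cyc (t * k + h)) ` {0..<N} = words"
    by (intro card_subset_eq) (auto simp: words_def finite_lists_length_eq)
  then show ?thesis using window_inj[OF h] by (simp add: bij_betw_def)
qed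

lemma card_window_eq: "w \<in> words \<Longrightarrow> card {\<rho>. \<rho> < L \<and> window cyc \<rho> = w} = k"
proof -
  assume w: "w \<in> words"
  have "card {t. t < N \<and> window cyc (t * k + h) = w} = 1" if h: "h < k" for h
  proof -
    have "card {t \<in> {0..<N}. window cyc (t * k + h) = w} = card {v \<in> words. v = w}"
      using bij_betw_Collect_pred[OF window_bij[OF h]] by (rule bij_betw_same_card)
    also have "{v \<in> words. v = w} = {w}" using w by auto
    finally show ?thesis by (simp add: atLeast0LessThan lessThan_def)
  qed
  then have "(\<Sum>h<k. card {t. t < N \<and> window cyc (t * k + h) = w}) = k" by simp
  moreover have "card {\<rho>. \<rho> < L \<and> window cyc \<rho> = w} =
      (\<Sum>h<k. card {t. t < N \<and> window cyc (t * k + h) = w})"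
    unfolding L_def mult.commute[of k N] by (rule card_less_mult_by_residue) (use k_ge_1 in simp)
  ultimately show ?thesis by simp
qed

lemma card_letter_eq: "d < q \<Longrightarrow> card {r. r < L \<and> cyc r = d} = k * q ^ (k - 1)"
proof -
  assume d: "d < q"
  let ?tails = "{xs. set xs \<subseteq> {0..<q} \<and> length xs = k - 1}"
  have heads: "{w \<in> words. w ! 0 = d} = (#) d ` ?tails"
  proof (intro equalityI subsetI)
    fix w assume "w \<in> {w \<in> words. w ! 0 = d}"
    then obtain xs where "w = d # xs" "xs \<in> ?tails"
      using k_ge_1 by (cases w) (auto simp: words_def)
    then show "w \<in> (#) d ` ?tails" by blast
  next
    fix w assume "w \<in> (#) d ` ?tails"
    then show "w \<in> {w \<in> words. w ! 0 = d}" using d k_ge_1 by (auto simp: words_def)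
  qed
  have "card {t. t < N \<and> cyc (t * k + h) = d} = q ^ (k - 1)" if h: "h < k" for h
  proof -
    have "t * k + h < L" if "t < N" for t
      using that h mult_le_mono1[of "Suc t" N k] by (simp add: L_def mult.commute)
    then have "{t. t < N \<and> cyc (t * k + h) = d} = {t \<in> {0..<N}. window cyc (t * k + h) ! 0 = d}"
      using k_ge_1 by (auto simp: window_nth)
    then have "card {t. t < N \<and> cyc (t * k + h) = d} = card {w \<in> words. w ! 0 = d}"
      using bij_betw_same_card[OF bij_betw_Collect_pred[OF window_bij[OF h]]] by simp
    also have "\<dots> = card ?tails"
      unfolding heads by (rule card_image) simp
    also have "\<dots> = q ^ (k - 1)" by (simp add: card_lists_length_eq)
    finally show ?thesis .
  qed
  then have "(\<Sum>h<k. card {t. t < N \<and> cyc (t * k + h) = d}) = k * q ^ (k - 1)" by simp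
  moreover have "card {r. r < L \<and> cyc r = d} = (\<Sum>h<k. card {t. t < N \<and> cyc (t * k + h) = d})"
    unfolding L_def mult.commute[of k N] by (rule card_less_mult_by_residue) (use k_ge_1 in simp)
  ultimately show ?thesis by simp
qed

lemma rot_bij: "bij_betw (\<lambda>r. (r + 1) mod L) {0..<L} {0..<L}"
proof -
  have inj: "inj_on (\<lambda>r. (r + 1) mod L) {0..<L}"
  proof (rule inj_onI)
    fix x y assume "x \<in> {0..<L}" "y \<in> {0..<L}" "(x + 1) mod L = (y + 1) mod L"
    then show "x = y" using Suc_mod_cancel[of x L y] by simp
  qed
  moreover have "(\<lambda>r. (r + 1) mod L) ` {0..<L} \<subseteq> {0..<L}" using L_pos by auto
  ultimately have "(\<lambda>r. (r + 1) mod L) ` {0..<L} = {0..<L}"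
    by (intro card_subset_eq) (simp_all add: card_image)
  then show ?thesis using inj by (simp add: bij_betw_def)
qed

lemma window_cyc_rot: "window cyc_rot \<rho> = window cyc ((\<rho> + 1) mod L)"
  unfolding window_def cyc_rot_def
proof (rule map_cong[OF refl])
  fix i
  have "((\<rho> + i) mod L + 1) mod L = (\<rho> + i + 1) mod L" by (rule mod_add_left_eq)
  also have "\<dots> = (\<rho> + 1 + i) mod L" by (simp add: ac_simps)
  also have "\<dots> = ((\<rho> + 1) mod L + i) mod L" by (rule mod_add_left_eq[symmetric])
  finally show "cyc (((\<rho> + i) mod L + 1) mod L) = cyc (((\<rho> + 1) mod L + i) mod L)" by simp
qed

lemma card_Collect_rot: "card {\<rho>. \<rho> < L \<and> P ((\<rho> + 1) mod L)} = card {\<rho>. \<rho> < L \<and> P \<rho>}"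
  using bij_betw_same_card[OF bij_betw_Collect_pred[OF rot_bij, of P]] by simp

lemma card_window_rot_eq: "w \<in> words \<Longrightarrow> card {\<rho>. \<rho> < L \<and> window cyc_rot \<rho> = w} = k"
  using card_Collect_rot[of "\<lambda>\<rho>. window cyc \<rho> = w"] card_window_eq by (simp add: window_cyc_rot)

lemma card_letter_rot_eq: "d < q \<Longrightarrow> card {r. r < L \<and> cyc_rot r = d} = k * q ^ (k - 1)"
  using card_Collect_rot[of "\<lambda>r. cyc r = d"] card_letter_eq by (simp add: cyc_rot_def)

end

section \<open>Normality of block concatenations\<close>

lemma occ_count_mono: "m \<le> m' \<Longrightarrow> occ_count c w m \<le> occ_count c w m'"
  unfolding occ_count_def by (rule card_mono) auto

definition block_seq :: "nat \<Rightarrow> (bool \<Rightarrow> nat \<Rightarrow> nat) \<Rightarrow> (nat \<Rightarrow> bool) \<Rightarrow> nat \<Rightarrow> nat" where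
  "block_seq L B e j = B (e (j div L)) (j mod L)"

text \<open>Since all blocks \<open>B \<beta>\<close> share their first \<open>K - 1\<close> letters, a window of length \<open>K\<close> starting
  in block \<open>t\<close> reads like a cyclic window of \<open>B (e t)\<close>.\<close>

lemma block_seq_window:
  fixes L K :: nat
  assumes "K < L" "\<rho> < L"
    and prefix: "\<And>\<beta> \<beta>' r. r + 1 < K \<Longrightarrow> B \<beta> r = B \<beta>' r"
  shows "map (block_seq L B e) [t * L + \<rho>..<t * L + \<rho> + K]
      = map (\<lambda>i. B (e t) ((\<rho> + i) mod L)) [0..<K]"
proof (rule nth_equalityI)
  fix i assume "i < length (map (block_seq L B e) [t * L + \<rho>..<t * L + \<rho> + K])"
  then have i: "i < K" by simp
  have "block_seq L B e (t * L + \<rho> + i) = B (e t) ((\<rho> + i) mod L)"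
  proof (cases "\<rho> + i < L")
    case True
    then show ?thesis by (simp add: block_seq_def add.assoc)
  next
    case False
    define j where "j = \<rho> + i - L"
    have j: "j + 1 < K" "t * L + \<rho> + i = Suc t * L + j" "j < L" "(\<rho> + i) mod L = j"
      using False i assms(1,2) by (auto simp: j_def mod_if)
    moreover have "(Suc t * L + j) div L = Suc t" "(Suc t * L + j) mod L = j"
      using j(3) by (simp_all del: mult_Suc)
    ultimately show ?thesis unfolding block_seq_def using prefix[OF j(1)] by metis
  qed
  then show "map (block_seq L B e) [t * L + \<rho>..<t * L + \<rho> + K] ! i
      = map (\<lambda>i. B (e t) ((\<rho> + i) mod L)) [0..<K] ! i"
    using i by (simp add: add.assoc)
qed simp

lemma occ_count_block_seq:
  fixes L K C :: nat
  assumes "K < L" and prefix: "\<And>\<beta> \<beta>' r. r + 1 < K \<Longrightarrow> B \<beta> r = B \<beta>' r"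
    and cyclic_count: "\<And>\<beta>. card {\<rho>. \<rho> < L \<and> map (\<lambda>i. B \<beta> ((\<rho> + i) mod L)) [0..<K] = w} = C"
    and "length w = K"
  shows "occ_count (block_seq L B e) w (t * L) = C * t"
proof (induct t)
  case (Suc t)
  let ?P = "\<lambda>j. map (block_seq L B e) [j..<j + length w] = w"
  have split: "{j. j < Suc t * L \<and> ?P j}
      = {j. j < t * L \<and> ?P j} \<union> (+) (t * L) ` {\<rho>. \<rho> < L \<and> ?P (t * L + \<rho>)}"
  proof (rule set_eqI, rule iffI)
    fix j assume j: "j \<in> {j. j < Suc t * L \<and> ?P j}"
    show "j \<in> {j. j < t * L \<and> ?P j} \<union> (+) (t * L) ` {\<rho>. \<rho> < L \<and> ?P (t * L + \<rho>)}"
    proof (cases "j < t * L")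
      case False
      then have "j = t * L + (j - t * L)" "j - t * L < L" using j by auto
      then show ?thesis using j by (auto intro!: image_eqI[of _ _ "j - t * L"])
    qed (use j in auto)
  qed auto
  have "{\<rho>. \<rho> < L \<and> ?P (t * L + \<rho>)} = {\<rho>. \<rho> < L \<and> map (\<lambda>i. B (e t) ((\<rho> + i) mod L)) [0..<K] = w}"
    using block_seq_window[OF assms(1) _ prefix] assms(4) by auto
  then have "card ((+) (t * L) ` {\<rho>. \<rho> < L \<and> ?P (t * L + \<rho>)}) = C"
    using cyclic_count by (simp add: card_image)
  then have "occ_count (block_seq L B e) w (Suc t * L) = occ_count (block_seq L B e) w (t * L) + C"
    unfolding occ_count_def split by (subst card_Un_disjoint) auto
  then show ?case using Suc by simp
qed (simp add: occ_count_def)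

lemma occ_count_linear_bound:
  fixes L C :: nat
  assumes "0 < L" and occ: "\<And>t. occ_count c w (t * L) = C * t"
  shows "\<bar>real (occ_count c w m) - real C / real L * real m\<bar> \<le> real C"
proof -
  define t where "t = m div L"
  have tm: "t * L \<le> m" "m \<le> (t + 1) * L"
    using assms(1) by (auto simp: t_def dividend_less_div_times less_imp_le)
  have "C * t \<le> occ_count c w m" "occ_count c w m \<le> C * (t + 1)"
    using occ_count_mono[OF tm(1), of c w] occ_count_mono[OF tm(2), of c w] occ[of t] occ[of "t + 1"]
    by simp_all
  then have "real (C * t) \<le> real (occ_count c w m)" "real (occ_count c w m) \<le> real (C * (t + 1))"
    by (simp_all only: of_nat_le_iff)
  moreover have "real (t * L) \<le> real m" "real m \<le> real ((t + 1) * L)"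
    using tm by (simp_all only: of_nat_le_iff)
  then have "real t * real L \<le> real m" "real m \<le> (real t + 1) * real L"
    by (simp_all add: algebra_simps)
  then have "real C / real L * (real t * real L) \<le> real C / real L * real m"
    "real C / real L * real m \<le> real C / real L * ((real t + 1) * real L)"
    by (simp_all only: mult_left_mono of_nat_0_le_iff divide_nonneg_nonneg)
  then have "real C * real t \<le> real C / real L * real m"
    "real C / real L * real m \<le> real C * (real t + 1)"
    using assms(1) by simp_all
  ultimately show ?thesis by (simp add: abs_le_iff algebra_simps)
qed

definition bounded_discrepancy :: "nat \<Rightarrow> nat \<Rightarrow> (nat \<Rightarrow> nat) \<Rightarrow> bool" where
  "bounded_discrepancy n k c \<longleftrightarrow> (\<exists>C. \<forall>w. length w = k \<and> set w \<subseteq> {0..n} \<longrightarrow>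
      (\<forall>m. \<bar>real (occ_count c w m) - real m / real (n + 1) ^ k\<bar> \<le> C))"

lemma LIMSEQ_div_of_bounded_deviation:
  fixes f :: "nat \<Rightarrow> real"
  assumes "\<And>m. \<bar>f m - \<alpha> * real m\<bar> \<le> C"
  shows "(\<lambda>m. f m / real m) \<longlonglongrightarrow> \<alpha>"
proof -
  have "(\<lambda>m. f m / real m - \<alpha>) \<longlonglongrightarrow> 0"
  proof (rule Lim_null_comparison)
    show "\<forall>\<^sub>F m in sequentially. norm (f m / real m - \<alpha>) \<le> C / real m"
    proof (rule eventually_sequentiallyI[of 1])
      fix m :: nat assume "1 \<le> m"
      then have "norm (f m / real m - \<alpha>) = \<bar>f m - \<alpha> * real m\<bar> / real m"
        by (simp add: field_simps)
      then show "norm (f m / real m - \<alpha>) \<le> C / real m"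
        using assms[of m] by (simp add: divide_right_mono)
    qed
  qed (rule lim_const_over_n)
  then show ?thesis by (simp add: LIM_zero_iff)
qed

lemma bounded_discrepancy_imp_k_simply_normal:
  "bounded_discrepancy n k c \<Longrightarrow> k_simply_normal n k c"
  unfolding bounded_discrepancy_def k_simply_normal_def
proof (elim exE, intro allI impI)
  fix C w
  assume "\<forall>w. length w = k \<and> set w \<subseteq> {0..n} \<longrightarrow>
      (\<forall>m. \<bar>real (occ_count c w m) - real m / real (n + 1) ^ k\<bar> \<le> C)"
    and "length w = k \<and> set w \<subseteq> {0..n}"
  then have "\<bar>real (occ_count c w m) - 1 / real (n + 1) ^ k * real m\<bar> \<le> C" for m by simp
  then show "(\<lambda>m. real (occ_count c w m) / real m) \<longlonglongrightarrow> 1 / real (n + 1) ^ k"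
    by (rule LIMSEQ_div_of_bounded_deviation)
qed

lemma bounded_discrepancy_block_seq:
  fixes L K :: nat
  assumes "K < L" "L = K * (n + 1) ^ K"
    and prefix: "\<And>\<beta> \<beta>' r. r + 1 < K \<Longrightarrow> B \<beta> r = B \<beta>' r"
    and cyclic_count: "\<And>\<beta> w. length w = K \<Longrightarrow> set w \<subseteq> {0..n} \<Longrightarrow>
      card {\<rho>. \<rho> < L \<and> map (\<lambda>i. B \<beta> ((\<rho> + i) mod L)) [0..<K] = w} = K"
  shows "bounded_discrepancy n K (block_seq L B e)"
  unfolding bounded_discrepancy_def
proof (intro exI allI impI)
  fix w :: "nat list" and m :: nat
  assume w: "length w = K \<and> set w \<subseteq> {0..n}"
  have "occ_count (block_seq L B e) w (t * L) = K * t" for t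
    by (rule occ_count_block_seq[OF assms(1) prefix cyclic_count]) (use w in auto)
  then have "\<bar>real (occ_count (block_seq L B e) w m) - real K / real L * real m\<bar> \<le> real K"
    by (intro occ_count_linear_bound) (use assms(1) in auto)
  moreover have "real L = real K * real (n + 1) ^ K" "0 < K" using assms(1,2) by auto
  then have "real K / real L * real m = real m / real (n + 1) ^ K" by simp
  ultimately show "\<bar>real (occ_count (block_seq L B e) w m) - real m / real (n + 1) ^ K\<bar> \<le> real K"
    by simp
qed

definition prepend :: "nat list \<Rightarrow> (nat \<Rightarrow> nat) \<Rightarrow> nat \<Rightarrow> nat" where
  "prepend u c j = (if j < length u then u ! j else c (j - length u))"

lemma map_prepend: "map (prepend u c) [0..<length u + j] = u @ map c [0..<j]"
  by (rule nth_equalityI) (auto simp: prepend_def nth_append)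

lemma occ_count_prepend:
  "occ_count c w (m - length u) \<le> occ_count (prepend u c) w m"
  "occ_count (prepend u c) w m \<le> length u + occ_count c w (m - length u)"
proof -
  let ?l = "length u"
  let ?P = "\<lambda>j. map c [j..<j + length w] = w"
  let ?P' = "\<lambda>j. map (prepend u c) [j..<j + length w] = w"
  have shift: "?P' (j + ?l) = ?P j" for j
  proof -
    have "map (prepend u c) [j + ?l..<j + ?l + length w] = map c [j..<j + length w]"
      by (rule nth_equalityI) (auto simp: prepend_def)
    then show ?thesis by simp
  qed
  have inj: "inj_on (\<lambda>j. j + ?l) A" for A by (simp add: inj_on_def)
  have "(\<lambda>j. j + ?l) ` {j. j < m - ?l \<and> ?P j} \<subseteq> {j. j < m \<and> ?P' j}" using shift by auto
  from card_mono[OF _ this] show "occ_count c w (m - ?l) \<le> occ_count (prepend u c) w m"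
    unfolding occ_count_def by (simp add: card_image[OF inj])
  have "{j. j < m \<and> ?P' j} \<subseteq> {..<?l} \<union> (\<lambda>j. j + ?l) ` {j. j < m - ?l \<and> ?P j}"
  proof
    fix j assume j: "j \<in> {j. j < m \<and> ?P' j}"
    show "j \<in> {..<?l} \<union> (\<lambda>j. j + ?l) ` {j. j < m - ?l \<and> ?P j}"
    proof (cases "j < ?l")
      case False
      then have "j = (j - ?l) + ?l" "?P (j - ?l)" using shift[of "j - ?l"] j by auto
      then show ?thesis using j False by (auto intro!: image_eqI[of _ _ "j - ?l"])
    qed auto
  qed
  then have "occ_count (prepend u c) w m \<le> card ({..<?l} \<union> (\<lambda>j. j + ?l) ` {j. j < m - ?l \<and> ?P j})"
    unfolding occ_count_def by (intro card_mono) auto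
  also have "\<dots> \<le> ?l + card ((\<lambda>j. j + ?l) ` {j. j < m - ?l \<and> ?P j})"
    using card_Un_le[of "{..<?l}"] by simp
  also have "card ((\<lambda>j. j + ?l) ` {j. j < m - ?l \<and> ?P j}) = occ_count c w (m - ?l)"
    unfolding occ_count_def by (rule card_image[OF inj])
  finally show "occ_count (prepend u c) w m \<le> ?l + occ_count c w (m - ?l)" .
qed

lemma bounded_discrepancy_prepend:
  assumes "bounded_discrepancy n k c"
  shows "bounded_discrepancy n k (prepend u c)"
proof -
  obtain C where C: "\<And>w m. length w = k \<Longrightarrow> set w \<subseteq> {0..n} \<Longrightarrow>
      \<bar>real (occ_count c w m) - real m / real (n + 1) ^ k\<bar> \<le> C"
    using assms unfolding bounded_discrepancy_def by blast
  let ?l = "length u"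
  let ?\<alpha> = "1 / real (n + 1) ^ k"
  have \<alpha>: "0 \<le> ?\<alpha>" "?\<alpha> \<le> 1" by auto
  show ?thesis unfolding bounded_discrepancy_def
  proof (intro exI allI impI)
    fix w m assume "length w = k \<and> set w \<subseteq> {0..n}"
    then have "\<bar>real (occ_count c w (m - ?l)) - ?\<alpha> * real (m - ?l)\<bar> \<le> C" using C by simp
    moreover have "real (occ_count c w (m - ?l)) \<le> real (occ_count (prepend u c) w m)"
      "real (occ_count (prepend u c) w m) \<le> real ?l + real (occ_count c w (m - ?l))"
      using occ_count_prepend[where c = c and w = w and m = m and u = u] by simp_all
    moreover have d: "real m - real ?l \<le> real (m - ?l)" "real (m - ?l) \<le> real m" by auto
    have "?\<alpha> * real m - ?\<alpha> * real ?l \<le> ?\<alpha> * real (m - ?l)" "?\<alpha> * real (m - ?l) \<le> ?\<alpha> * real m"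
      using mult_left_mono[OF d(1) \<alpha>(1)] mult_left_mono[OF d(2) \<alpha>(1)]
        by (simp_all only: right_diff_distrib)
    moreover have "?\<alpha> * real ?l \<le> real ?l" using \<alpha> by (intro mult_left_le_one_le) auto
    ultimately show "\<bar>real (occ_count (prepend u c) w m) - real m / real (n + 1) ^ k\<bar> \<le> C + 2 * real ?l"
      by (simp add: abs_le_iff)
  qed
qed

section \<open>Coding by concatenations of two blocks\<close>

context ifs
begin

lemma comp_prefix_prepend:
  assumes "(\<lambda>j. comp_prefix S c j 0) \<longlonglongrightarrow> y"
  shows "(\<lambda>j. comp_prefix S (prepend u c) j 0) \<longlonglongrightarrow> Sw u y"
proof (rule LIMSEQ_offset[where k = "length u"])
  have "comp_prefix S (prepend u c) (j + length u) 0 = ratio u * comp_prefix S c j 0 + Sw u 0" for j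
    unfolding comp_prefix_eq_Sw using map_prepend[of u c j] Sw_affine[of u "Sw (map c [0..<j]) 0"]
    by (simp add: Sw_append add.commute)
  moreover have "(\<lambda>j. ratio u * comp_prefix S c j 0 + Sw u 0) \<longlonglongrightarrow> ratio u * y + Sw u 0"
    by (intro tendsto_intros assms)
  ultimately show "(\<lambda>j. comp_prefix S (prepend u c) (j + length u) 0) \<longlonglongrightarrow> Sw u y"
    using Sw_affine[of u y] by simp
qed

lemma comp_prefix_tendsto:
  assumes c: "\<And>j. c j \<le> n" and AB: "0 \<in> {A..B}" "\<And>i. i \<le> n \<Longrightarrow> p i \<in> {A..B}"
    and codes: "\<And>M. \<exists>m\<ge>M. \<exists>y\<in>{A..B}. x = Sw (map c [0..<m]) y"
  shows "(\<lambda>j. comp_prefix S c j 0) \<longlonglongrightarrow> x"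
proof (rule LIMSEQ_I)
  fix r :: real assume r: "0 < r"
  have BA: "0 < B - A + 1" using AB(1) by simp
  obtain M where "lam_max ^ M < r / (B - A + 1)"
    using real_arch_pow_inv[of "r / (B - A + 1)" lam_max] r BA lam_max_bounds by auto
  then have "lam_max ^ M * (B - A + 1) < r" using BA by (simp add: field_simps)
  moreover have "lam_max ^ M * (B - A) \<le> lam_max ^ M * (B - A + 1)"
    by (rule mult_left_mono) (use lam_max_bounds in auto)
  ultimately have M: "lam_max ^ M * (B - A) < r" by linarith
  obtain m y where m: "M \<le> m" "y \<in> {A..B}" "x = Sw (map c [0..<m]) y" using codes by blast
  have words: "set (map c [0..<m]) \<subseteq> {0..n}" "set (map c [m..<j]) \<subseteq> {0..n}" for j
    using c by auto
  show "\<exists>no. \<forall>j\<ge>no. norm (comp_prefix S c j 0 - x) < r"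
  proof (intro exI allI impI)
    fix j assume "m \<le> j"
    then have "[0..<j] = [0..<m] @ [m..<j]" by (metis le_add_diff_inverse upt_add_eq_append zero_le)
    then have "comp_prefix S c j 0 = Sw (map c [0..<m]) (Sw (map c [m..<j]) 0)"
      by (simp add: comp_prefix_eq_Sw Sw_append)
    moreover have "Sw (map c [m..<j]) 0 \<in> {A..B}" using Sw_mem_interval[OF words(2) AB(2,1)] .
    ultimately have "norm (comp_prefix S c j 0 - x) \<le> ratio (map c [0..<m]) * (B - A)"
      using m(2,3) Sw_diff[of "map c [0..<m]"] ratio_pos[OF words(1)]
      by (auto simp: abs_mult intro!: mult_left_mono)
    also have "\<dots> \<le> lam_max ^ M * (B - A)"
    proof (rule mult_right_mono)
      show "ratio (map c [0..<m]) \<le> lam_max ^ M"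
      proof -
        have "lam_max ^ m \<le> lam_max ^ M"
          using power_decreasing[OF m(1), of lam_max] lam_max_bounds by simp
        then show ?thesis using ratio_le_lam_max_power[OF words(1)] by simp
      qed
    qed (use AB in auto)
    finally show "norm (comp_prefix S c j 0 - x) < r" using M by simp
  qed
qed

end

text \<open>Since \<open>\<Lambda> \<ge> 1/2\<close>, the images of the interval under the two contractions cover it.\<close>

lemma two_contractions_itinerary_ordered:
  fixes f :: "bool \<Rightarrow> real" and \<Lambda> x :: real
  assumes "1 / 2 \<le> \<Lambda>" "f False \<le> f True" "x \<in> {f False..f True}"
  obtains e y where "y 0 = x" "\<And>m. y m \<in> {f False..f True}"
    "\<And>m. y m = f (e m) + \<Lambda> * (y (Suc m) - f (e m))"
proof -
  define thr where "thr = f False + \<Lambda> * (f True - f False)"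
  define g where
    "g z = (if z \<le> thr then f False + (z - f False) / \<Lambda> else f True + (z - f True) / \<Lambda>)" for z
  define y where "y m = (g ^^ m) x" for m
  define e where "e m = (\<not> y m \<le> thr)" for m
  have \<Lambda>: "0 < \<Lambda>" using assms(1) by simp
  have y_Suc: "y (Suc m) = g (y m)" for m by (simp add: y_def)
  have "y m \<in> {f False..f True}" for m
  proof (induct m)
    case (Suc m)
    have "(f True - f False) * (1 - 2 * \<Lambda>) \<le> 0" using assms(1,2) by (intro mult_nonneg_nonpos) auto
    then show ?case using Suc \<Lambda> by (auto simp: y_Suc g_def thr_def field_simps)
  qed (use assms(3) in \<open>simp add: y_def\<close>)
  moreover have "y m = f (e m) + \<Lambda> * (y (Suc m) - f (e m))" for m
    using \<Lambda> by (cases "e m") (simp_all add: y_Suc g_def e_def)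
  ultimately show ?thesis using that[of y e] by (simp add: y_def)
qed

lemma two_contractions_itinerary:
  fixes f :: "bool \<Rightarrow> real" and \<Lambda> x :: real
  assumes "1 / 2 \<le> \<Lambda>" "x \<in> {min (f False) (f True)..max (f False) (f True)}"
  obtains e y where "y 0 = x" "\<And>m. y m \<in> {min (f False) (f True)..max (f False) (f True)}"
    "\<And>m. y m = f (e m) + \<Lambda> * (y (Suc m) - f (e m))"
proof (cases "f False \<le> f True")
  case True
  then have "x \<in> {f False..f True}" using assms(2) by simp
  then obtain e y where "y 0 = x" "\<And>m. y m \<in> {f False..f True}"
    "\<And>m. y m = f (e m) + \<Lambda> * (y (Suc m) - f (e m))"
    using two_contractions_itinerary_ordered[OF assms(1) True] by blast
  moreover have "{f False..f True} = {min (f False) (f True)..max (f False) (f True)}"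
    using True by simp
  ultimately show ?thesis using that[of y e] by metis
next
  case False
  then have "(f \<circ> Not) False \<le> (f \<circ> Not) True" "x \<in> {(f \<circ> Not) False..(f \<circ> Not) True}"
    using assms(2) by auto
  then obtain e y where "y 0 = x" "\<And>m. y m \<in> {(f \<circ> Not) False..(f \<circ> Not) True}"
    "\<And>m. y m = (f \<circ> Not) (e m) + \<Lambda> * (y (Suc m) - (f \<circ> Not) (e m))"
    using two_contractions_itinerary_ordered[OF assms(1)] by blast
  moreover have "{(f \<circ> Not) False..(f \<circ> Not) True}
      = {min (f False) (f True)..max (f False) (f True)}"
    using False by simp
  ultimately show ?thesis using that[of y "Not \<circ> e"] by (metis comp_apply)
qed

lemma prod_list_map_by_letter_count:
  fixes g :: "nat \<Rightarrow> 'a::comm_monoid_mult"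
  assumes "\<And>r. r < L \<Longrightarrow> f r < Q" "\<And>i. i < Q \<Longrightarrow> card {r. r < L \<and> f r = i} = E"
  shows "prod_list (map g (map f [0..<L])) = (\<Prod>i<Q. g i ^ E)"
proof -
  have "prod_list (map g (map f [0..<L])) = (\<Prod>r<L. g (f r))"
    using prod.distinct_set_conv_list[of "[0..<L]" "\<lambda>r. g (f r)"]
      by (simp add: atLeast0LessThan o_def)
  also have "\<dots> = (\<Prod>i<Q. \<Prod>r\<in>{r \<in> {..<L}. f r = i}. g (f r))"
    by (rule prod.group[symmetric]) (use assms(1) in auto)
  also have "\<dots> = (\<Prod>i<Q. g i ^ E)"
  proof (rule prod.cong[OF refl])
    fix i assume "i \<in> {..<Q}"
    then have "card {r \<in> {..<L}. f r = i} = E" using assms(2)[of i] by (simp add: lessThan_def)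
    then show "(\<Prod>r\<in>{r \<in> {..<L}. f r = i}. g (f r)) = g i ^ E" by simp
  qed
  finally show ?thesis .
qed

locale ifs_large_ratios = ifs_nonconstant +
  fixes k :: nat
  assumes k_ge_1: "1 \<le> k"
    and large_ratios: "1 / 2 \<le> (\<Prod>i\<in>{0..n}. lam i ^ (k * (n + 1) ^ (k - 1)))"

sublocale ifs_large_ratios \<subseteq> ifs_overlap
  using lam_sum_gt_1[OF large_ratios] k_ge_1 by unfold_locales auto

context ifs_large_ratios
begin

lemma n_ge_1: "1 \<le> n"
  using i0(1) i1(1) i0_ne_i1 by linarith

text \<open>Relabelling by the transposition of \<open>0\<close> and \<open>i0\<close> makes the first block start, and its
  rotation end, with the letter \<open>i0\<close>; this relates their fixed points by \<open>S i0\<close>.\<close>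

sublocale C: digit_cycle "Suc n" k "id(0 := i0, i0 := 0)"
proof
  show "bij_betw (id(0 := i0, i0 := 0)) {0..<Suc n} {0..<Suc n}"
    by (rule bij_betw_byWitness[where f' = "id(0 := i0, i0 := 0)"]) (use i0(1) in auto)
qed (use n_ge_1 k_ge_1 in auto)

definition block :: "bool \<Rightarrow> nat \<Rightarrow> nat" where "block \<beta> = (if \<beta> then C.cyc_rot else C.cyc)"

definition block_word :: "bool \<Rightarrow> nat list" where "block_word \<beta> = map (block \<beta>) [0..<C.L]"

definition block_ratio :: real where "block_ratio = (\<Prod>i\<in>{0..n}. lam i ^ (k * (n + 1) ^ (k - 1)))"

lemma block_le: "block \<beta> r \<le> n"
  using C.cyc_less C.cyc_rot_less by (simp add: block_def less_Suc_eq_le)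

lemma set_block_word: "set (block_word \<beta>) \<subseteq> {0..n}"
  using block_le by (auto simp: block_word_def)

lemma block_word_ne_Nil: "block_word \<beta> \<noteq> []"
  using C.L_pos by (simp add: block_word_def)

lemma ratio_block_word: "ratio (block_word \<beta>) = block_ratio"
proof -
  have "card {r. r < C.L \<and> block \<beta> r = i} = k * (n + 1) ^ (k - 1)" if "i < n + 1" for i
    using C.card_letter_eq C.card_letter_rot_eq that by (simp add: block_def)
  then have "ratio (block_word \<beta>) = (\<Prod>i<n + 1. lam i ^ (k * (n + 1) ^ (k - 1)))"
    unfolding ratio_def block_word_def using block_le
    by (intro prod_list_map_by_letter_count) (auto simp: less_Suc_eq_le)
  also have "{..<n + 1} = {0..n}" by auto
  finally show ?thesis by (simp add: block_ratio_def)
qed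

lemma block_ratio_bounds: "1 / 2 \<le> block_ratio" "block_ratio < 1"
  using large_ratios ratio_less_1[OF set_block_word block_word_ne_Nil] ratio_block_word
    by (auto simp: block_ratio_def)

definition block_fixpt :: "bool \<Rightarrow> real" where
  "block_fixpt \<beta> = Sw (block_word \<beta>) 0 / (1 - block_ratio)"

lemma Sw_block_word: "Sw (block_word \<beta>) x = block_fixpt \<beta> + block_ratio * (x - block_fixpt \<beta>)"
proof -
  have "1 - block_ratio \<noteq> 0" using block_ratio_bounds by simp
  then have "(1 - block_ratio) * block_fixpt \<beta> = Sw (block_word \<beta>) 0" by (simp add: block_fixpt_def)
  moreover have "block_fixpt \<beta> + block_ratio * (x - block_fixpt \<beta>)
      = block_ratio * x + (1 - block_ratio) * block_fixpt \<beta>" by (simp add: algebra_simps)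
  ultimately show ?thesis using Sw_affine[of "block_word \<beta>" x] ratio_block_word by simp
qed

lemma block_word_rotate: "block_word False = i0 # tl (block_word False)"
  "block_word True = tl (block_word False) @ [i0]"
proof -
  have cyc0: "C.cyc 0 = i0" unfolding C.cyc_def by (simp add: digit_def)
  show "block_word False = i0 # tl (block_word False)"
    using C.L_pos by (simp add: block_word_def block_def upt_conv_Cons cyc0)
  show "block_word True = tl (block_word False) @ [i0]"
  proof (rule nth_equalityI)
    show "length (block_word True) = length (tl (block_word False) @ [i0])"
      using C.L_pos by (simp add: block_word_def)
    fix r assume "r < length (block_word True)"
    then have r: "r < C.L" by (simp add: block_word_def)
    show "block_word True ! r = (tl (block_word False) @ [i0]) ! r"
    proof (cases "r + 1 < C.L")
      case True
      then have "r < C.L - 1" by simp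
      then show ?thesis
        using True by (simp add: block_word_def block_def C.cyc_rot_def nth_append nth_tl)
    next
      case False
      then have "r + 1 = C.L" using r by simp
      then have "r = C.L - 1" "(r + 1) mod C.L = 0" by simp_all
      then show ?thesis
        using r by (simp add: block_word_def block_def C.cyc_rot_def nth_append cyc0)
    qed
  qed
qed

lemma block_fixpt_False: "block_fixpt False = S i0 (block_fixpt True)"
proof -
  have "Sw (block_word False) z = S i0 (Sw (tl (block_word False)) z)" for z
    using block_word_rotate(1) by (metis Sw_Cons comp_apply)
  moreover have "Sw (block_word True) z = Sw (tl (block_word False)) (S i0 z)" for z
    using block_word_rotate(2) by (simp add: Sw_append)
  ultimately have "Sw (block_word False) (S i0 (block_fixpt True))
      = S i0 (Sw (block_word True) (block_fixpt True))"
    by simp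
  then have "Sw (block_word False) (S i0 (block_fixpt True)) = S i0 (block_fixpt True)"
    by (simp add: Sw_block_word)
  then show ?thesis
    using Sw_fixpoint_unique[OF set_block_word block_word_ne_Nil, of False] Sw_block_word[of False "block_fixpt False"] by simp
qed

lemma block_fixpt_mem_ab: "block_fixpt \<beta> \<in> {a..b}"
  using Sw_fixpoint_mem_ab[OF set_block_word[of \<beta>] block_word_ne_Nil] by (simp add: Sw_block_word)

lemma a_less_block_fixpt_True: "a < block_fixpt True"
proof -
  have "0 < card {r. r < C.L \<and> C.cyc_rot r = i1}"
    using C.card_letter_rot_eq[of i1] i1(1) k_ge_1 by simp
  then obtain r where "r < C.L" "C.cyc_rot r = i1" by (auto simp: card_gt_0_iff)
  then have "i1 \<in> set (block_word True)"
    by (auto simp: block_word_def block_def intro!: image_eqI[of _ _ r])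
  then have "a < Sw (block_word True) a"
    using i1 a_less_b by (intro Sw_greater[OF set_block_word p_mem_ab]) (auto intro!: bexI[of _ i1])
  then have "0 < (1 - block_ratio) * (block_fixpt True - a)"
    by (simp add: Sw_block_word algebra_simps)
  then show ?thesis using block_ratio_bounds by (simp add: zero_less_mult_iff)
qed

lemma block_fixpt_False_ne_True: "block_fixpt False \<noteq> block_fixpt True"
proof
  assume "block_fixpt False = block_fixpt True"
  then have "(1 - lam i0) * (a - block_fixpt True) = 0"
    using block_fixpt_False i0 by (simp add: S_eq algebra_simps)
  then show False using lam_bounds[OF i0(1)] a_less_block_fixpt_True by simp
qed

definition lo :: real where "lo = min (block_fixpt False) (block_fixpt True)"

definition hi :: real where "hi = max (block_fixpt False) (block_fixpt True)"

lemma lo_hi: "a \<le> lo" "lo < hi" "hi \<le> b"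
  using block_fixpt_mem_ab[of False] block_fixpt_mem_ab[of True] block_fixpt_False_ne_True
    by (auto simp: lo_def hi_def)

lemma bounded_discrepancy_blocks: "bounded_discrepancy n k (block_seq C.L block e)"
proof (rule bounded_discrepancy_block_seq)
  show "k < C.L" "C.L = k * (n + 1) ^ k" using C.k_less_L by (simp_all add: C.L_def C.N_def)
  show "block \<beta> r = block \<beta>' r" if "r + 1 < k" for \<beta> \<beta>' r
  proof -
    have "C.cyc r = C.cyc_rot r"
      using C.cyc_initial[OF that] C.cyc_rot_initial[OF that] by (simp only:)
    then show ?thesis unfolding block_def by (cases \<beta>; cases \<beta>') (simp_all only: if_True if_False)
  qed
  show "card {\<rho>. \<rho> < C.L \<and> map (\<lambda>i. block \<beta> ((\<rho> + i) mod C.L)) [0..<k] = w} = k"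
    if "length w = k" "set w \<subseteq> {0..n}" for \<beta> w
  proof -
    have "w \<in> C.words" using that by (auto simp: C.words_def)
    then show ?thesis
      using C.card_window_eq C.card_window_rot_eq by (simp add: block_def C.window_def)
  qed
qed

lemma map_block_seq: "map (block_seq C.L block e) [0..<m * C.L]
    = concat (map (\<lambda>t. block_word (e t)) [0..<m])"
proof (induct m)
  case (Suc m)
  have "Suc m * C.L = m * C.L + C.L" by simp
  then have "[0..<Suc m * C.L] = [0..<m * C.L] @ [m * C.L..<m * C.L + C.L]"
    by (simp only: upt_add_eq_append[of 0 "m * C.L" C.L] zero_le)
  moreover have "map (block_seq C.L block e) [m * C.L..<m * C.L + C.L] = block_word (e m)"
    by (rule nth_equalityI) (simp_all add: block_word_def block_seq_def)
  ultimately show ?case using Suc by simp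
qed simp

lemma block_seq_codes:
  assumes "x \<in> {lo..hi}"
  obtains e where "(\<lambda>j. comp_prefix S (block_seq C.L block e) j 0) \<longlonglongrightarrow> x"
proof -
  obtain e y where y: "y 0 = x" "\<And>m. y m \<in> {lo..hi}"
    "\<And>m. y m = block_fixpt (e m) + block_ratio * (y (Suc m) - block_fixpt (e m))"
    using two_contractions_itinerary[OF block_ratio_bounds(1)] assms unfolding lo_def hi_def
      by blast
  have prefix: "x = Sw (map (block_seq C.L block e) [0..<m * C.L]) (y m)" for m
  proof (induct m)
    case (Suc m)
    then show ?case unfolding map_block_seq
      by (simp add: Sw_append Sw_block_word y(3)[of m, symmetric])
  qed (simp add: y(1))
  have "(\<lambda>j. comp_prefix S (block_seq C.L block e) j 0) \<longlonglongrightarrow> x"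
  proof (rule comp_prefix_tendsto)
    show "block_seq C.L block e j \<le> n" for j by (simp add: block_seq_def block_le)
    show "0 \<in> {min a 0..max b 0}" by simp
    show "p i \<in> {min a 0..max b 0}" if "i \<le> n" for i using p_mem_ab[OF that] by auto
    show "\<exists>m\<ge>M. \<exists>z\<in>{min a 0..max b 0}. x = Sw (map (block_seq C.L block e) [0..<m]) z" for M
      using prefix[of M] y(2)[of M] lo_hi C.L_pos
      by (intro exI[of _ "M * C.L"] conjI bexI[of _ "y M"]) (auto simp: dest: le_trans)
  qed
  then show ?thesis using that by blast
qed

definition G :: "real set" where "G = (\<Union>u\<in>{u. set u \<subseteq> {0..n}}. Sw u ` {lo<..<hi})"

lemma open_G: "open G"
  unfolding G_def
proof (intro open_UN ballI)
  fix u assume "u \<in> {u. set u \<subseteq> {0..n}}"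
  then have "ratio u \<noteq> 0" using ratio_pos by force
  have "Sw u = (\<lambda>x. Sw u 0 + ratio u *\<^sub>R x)"
  proof
    show "Sw u x = Sw u 0 + ratio u *\<^sub>R x" for x using Sw_affine[of u x] by simp
  qed
  then show "open (Sw u ` {lo<..<hi})"
    by (subst (1) \<open>Sw u = _\<close>) (intro open_affinity \<open>ratio u \<noteq> 0\<close> open_greaterThanLessThan)
qed

lemma G_subset_ab: "G \<subseteq> {a..b}"
  using Sw_mem_ab lo_hi unfolding G_def by fastforce

lemma G_coded_normally:
  assumes "x \<in> G"
  obtains c where "\<And>j. c j \<le> n" "k_simply_normal n k c" "(\<lambda>j. comp_prefix S c j 0) \<longlonglongrightarrow> x"
proof -
  obtain u z where u: "set u \<subseteq> {0..n}" and "z \<in> {lo<..<hi}" and x: "x = Sw u z"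
    using assms unfolding G_def by blast
  then have z: "z \<in> {lo..hi}" by simp
  obtain e where "(\<lambda>j. comp_prefix S (block_seq C.L block e) j 0) \<longlonglongrightarrow> z"
    using block_seq_codes[OF z] by blast
  then have "(\<lambda>j. comp_prefix S (prepend u (block_seq C.L block e)) j 0) \<longlonglongrightarrow> x"
    unfolding x by (rule comp_prefix_prepend)
  moreover have "k_simply_normal n k (prepend u (block_seq C.L block e))"
    by (intro bounded_discrepancy_imp_k_simply_normal bounded_discrepancy_prepend bounded_discrepancy_blocks)
  moreover have "prepend u (block_seq C.L block e) j \<le> n" for j
    using u nth_mem[of j u] by (force simp: prepend_def block_seq_def block_le)
  ultimately show ?thesis using that by blast
qed

lemma ab_subset_closure_G: "{a..b} \<subseteq> closure G"
proof (rule ab_subset_closure)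
  fix u assume "set u \<subseteq> {0..n}"
  then have "Sw u ((lo + hi) / 2) \<in> cyl u \<inter> G"
    using lo_hi unfolding cyl_def G_def by auto
  then show "cyl u \<inter> G \<noteq> {}" by blast
qed

end

section \<open>The points without normal coding form a null set\<close>

lemma measure_le_of_cball_density:
  fixes E U :: "'a::euclidean_space set"
  assumes E: "E \<in> lmeasurable" and U: "U \<in> lmeasurable" and "0 \<le> \<rho>"
    and cover: "\<And>x d. x \<in> E \<Longrightarrow> 0 < d \<Longrightarrow> \<exists>c r. 0 < r \<and> r < d \<and> x \<in> cball c r \<and> cball c r \<subseteq> U \<and>
      measure lebesgue (E \<inter> cball c r) \<le> \<rho> * measure lebesgue (cball c r)"
  shows "measure lebesgue E \<le> \<rho> * measure lebesgue U"
proof -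
  define K where "K = {(c, r). 0 < r \<and> cball c r \<subseteq> U \<and>
    measure lebesgue (E \<inter> cball c r) \<le> \<rho> * measure lebesgue (cball c r)}"
  let ?ball = "\<lambda>i. cball (fst i) (snd i)"
  obtain C where C: "countable C" "C \<subseteq> K" and disj: "pairwise (\<lambda>i j. disjnt (?ball i) (?ball j)) C"
    and null: "negligible (E - (\<Union>i\<in>C. ?ball i))"
  proof (rule Vitali_covering_theorem_cballs[of K snd E fst])
    show "\<And>i. i \<in> K \<Longrightarrow> 0 < snd i" by (auto simp: K_def)
    show "\<exists>i. i \<in> K \<and> x \<in> ?ball i \<and> snd i < d" if "x \<in> E" "0 < d" for x d
      using cover[OF that] by (fastforce simp: K_def)
  qed blast
  have E_ball: "E \<inter> ?ball i \<in> lmeasurable" for i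
    using E by (intro fmeasurable_Int_fmeasurable) auto
  have bound: "measure lebesgue (\<Union>i\<in>I. E \<inter> ?ball i) \<le> \<rho> * measure lebesgue U"
    if "I \<subseteq> C" "finite I" for I
  proof -
    have IK: "\<And>i. i \<in> I \<Longrightarrow> i \<in> K" using that C by auto
    have "measure lebesgue (\<Union>i\<in>I. E \<inter> ?ball i) \<le> (\<Sum>i\<in>I. measure lebesgue (E \<inter> ?ball i))"
      using E_ball that(2) by (intro measure_UNION_le) (auto intro: fmeasurableD)
    also have "\<dots> \<le> (\<Sum>i\<in>I. \<rho> * measure lebesgue (?ball i))"
      using IK by (intro sum_mono) (auto simp: K_def)
    also have "\<dots> = \<rho> * (\<Sum>i\<in>I. measure lebesgue (?ball i))" by (simp add: sum_distrib_left)
    also have "(\<Sum>i\<in>I. measure lebesgue (?ball i)) = measure lebesgue (\<Union>i\<in>I. ?ball i)"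
      by (rule measure_UNION'[symmetric, OF that(2)]) (use disj that(1) in \<open>auto elim: pairwise_subset\<close>)
    also have "\<rho> * measure lebesgue (\<Union>i\<in>I. ?ball i) \<le> \<rho> * measure lebesgue U"
    proof (intro mult_left_mono measure_mono_fmeasurable assms(3) U)
      show "(\<Union>i\<in>I. ?ball i) \<subseteq> U" using IK by (force simp: K_def)
    qed (use that(2) in auto)
    finally show ?thesis .
  qed
  have UC: "(\<Union>i\<in>C. E \<inter> ?ball i) \<in> lmeasurable"
    "measure lebesgue (\<Union>i\<in>C. E \<inter> ?ball i) \<le> \<rho> * measure lebesgue U"
    using fmeasurable_UN_bound[OF C(1) E_ball bound] measure_UN_bound[OF C(1) E_ball bound] by auto
  have N: "E - (\<Union>i\<in>C. ?ball i) \<in> lmeasurable" using null by (rule negligible_imp_measurable)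
  have "measure lebesgue E \<le> measure lebesgue ((E - (\<Union>i\<in>C. ?ball i)) \<union> (\<Union>i\<in>C. E \<inter> ?ball i))"
    using E N UC(1) by (intro measure_mono_fmeasurable) (auto intro: fmeasurableD)
  also have "\<dots> \<le> measure lebesgue (E - (\<Union>i\<in>C. ?ball i)) + measure lebesgue (\<Union>i\<in>C. E \<inter> ?ball i)"
    using N UC(1) by (intro measure_Un_le) (auto intro: fmeasurableD)
  also have "measure lebesgue (E - (\<Union>i\<in>C. ?ball i)) = 0"
    using null by (rule negligible_imp_measure0)
  finally show ?thesis using UC(2) by simp
qed

context ifs_large_ratios
begin

lemma ab_minus_G_inter_cyl: "set u \<subseteq> {0..n} \<Longrightarrow> ({a..b} - G) \<inter> cyl u \<subseteq> Sw u ` ({a..b} - G)"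
proof
  fix x assume u: "set u \<subseteq> {0..n}" and x: "x \<in> ({a..b} - G) \<inter> cyl u"
  then obtain y where y: "y \<in> {a..b}" "x = Sw u y" by (auto simp: cyl_def)
  have "y \<notin> G"
  proof
    assume "y \<in> G"
    then obtain v z where v: "set v \<subseteq> {0..n}" "z \<in> {lo<..<hi}" "y = Sw v z" unfolding G_def by blast
    then have "set (u @ v) \<subseteq> {0..n}" "x = Sw (u @ v) z" using u y by (auto simp: Sw_append)
    then have "x \<in> G" using v(2) unfolding G_def by (intro UN_I[of "u @ v"]) auto
    then show False using x by blast
  qed
  then show "x \<in> Sw u ` ({a..b} - G)" using y by blast
qed

lemma compact_ab_minus_G: "compact ({a..b} - G)"
  using open_G by (simp add: Diff_eq compact_Int_closed closed_Compl)

text \<open>Self-similarity: \<open>{a..b} - G\<close> occupies no larger a proportion of any cylinder than of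
  \<open>{a..b}\<close> itself.\<close>

lemma measure_ab_minus_G_inter_cyl:
  assumes "set u \<subseteq> {0..n}"
  shows "measure lebesgue (({a..b} - G) \<inter> cyl u) \<le>
    measure lebesgue ({a..b} - G) / (b - a) * measure lebesgue (cyl u)"
proof -
  have "compact (Sw u ` ({a..b} - G))"
    by (intro compact_continuous_image continuous_on_Sw compact_ab_minus_G)
  moreover have "({a..b} - G) \<inter> cyl u \<in> sets lebesgue"
    using lmeasurable_compact[OF compact_ab_minus_G] assms by (auto simp: cyl_eq_cball)
  ultimately have "measure lebesgue (({a..b} - G) \<inter> cyl u) \<le> measure lebesgue (Sw u ` ({a..b} - G))"
    using ab_minus_G_inter_cyl[OF assms]
      by (intro measure_mono_fmeasurable lmeasurable_compact) auto
  also have "\<dots> = measure lebesgue ({a..b} - G) / (b - a) * measure lebesgue (cyl u)"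
    using measure_Sw_image[OF assms] a_less_b by (simp add: cyl_def)
  finally show ?thesis .
qed

lemma ab_minus_G_small_open_superset:
  obtains U where "open U" "U \<in> lmeasurable" "{a..b} - G \<subseteq> U" "measure lebesgue U < b - a"
proof -
  define \<delta> where "\<delta> = (hi - lo) / 5"
  let ?U = "{a - \<delta><..<b + \<delta>} - {lo + \<delta>..hi - \<delta>}"
  have \<delta>: "0 < \<delta>" "hi - lo = 5 * \<delta>" using lo_hi by (simp_all add: \<delta>_def)
  have "{lo + \<delta>..hi - \<delta>} \<subseteq> G"
  proof
    fix x assume "x \<in> {lo + \<delta>..hi - \<delta>}"
    then have "x \<in> Sw [] ` {lo<..<hi}" using \<delta> by auto
    then show "x \<in> G" unfolding G_def by (rule UN_I[rotated]) simp
  qed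
  then have "{a..b} - G \<subseteq> ?U" using \<delta> by auto
  moreover have "{lo + \<delta>..hi - \<delta>} \<subseteq> {a - \<delta><..<b + \<delta>}" "lo + \<delta> \<le> hi - \<delta>"
    using lo_hi \<delta> by auto
  then have "measure lebesgue ?U = (b - a + 2 * \<delta>) - (hi - lo - 2 * \<delta>)"
    using a_less_b \<delta> by (subst measurable_measure_Diff) auto
  moreover have "open ?U" "?U \<in> lmeasurable" by (auto intro: open_Diff fmeasurable_Diff)
  ultimately show ?thesis using that[of ?U] \<delta> by simp
qed

lemma negligible_ab_minus_G: "negligible ({a..b} - G)"
proof -
  define E where "E = {a..b} - G"
  define \<rho> where "\<rho> = measure lebesgue E / (b - a)"
  have E: "E \<in> lmeasurable" unfolding E_def by (rule lmeasurable_compact[OF compact_ab_minus_G])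
  obtain U where U: "open U" "U \<in> lmeasurable" "E \<subseteq> U" "measure lebesgue U < b - a"
    using ab_minus_G_small_open_superset unfolding E_def by blast
  have "measure lebesgue E \<le> \<rho> * measure lebesgue U"
  proof (rule measure_le_of_cball_density[OF E U(2)])
    show "0 \<le> \<rho>" using a_less_b by (simp add: \<rho>_def)
    fix x d :: real assume x: "x \<in> E" and d: "0 < d"
    obtain \<epsilon> where \<epsilon>: "0 < \<epsilon>" "ball x \<epsilon> \<subseteq> U" using U(1,3) x open_contains_ball by blast
    obtain u where u: "set u \<subseteq> {0..n}" "x \<in> cyl u" "ratio u * (b - a) < min \<epsilon> d"
      using exists_small_cyl[of x "min \<epsilon> d"] x \<epsilon> d by (auto simp: E_def)
    have "cyl u \<subseteq> U" using cyl_subset_ball[OF u(1,2), of \<epsilon>] \<epsilon> u(3) by auto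
    moreover have "0 < ratio u * (b - a) / 2" "ratio u * (b - a) / 2 < d"
      using ratio_pos[OF u(1)] a_less_b u(3) d by auto
    ultimately show "\<exists>c r. 0 < r \<and> r < d \<and> x \<in> cball c r \<and> cball c r \<subseteq> U \<and>
        measure lebesgue (E \<inter> cball c r) \<le> \<rho> * measure lebesgue (cball c r)"
      using u(2) measure_ab_minus_G_inter_cyl[OF u(1)] unfolding cyl_eq_cball[OF u(1)] E_def \<rho>_def
      by blast
  qed
  have "measure lebesgue E = 0"
  proof (rule ccontr)
    assume "measure lebesgue E \<noteq> 0"
    then have "0 < measure lebesgue E" using measure_nonneg[of lebesgue E] by linarith
    then have "0 < \<rho>" using a_less_b by (simp add: \<rho>_def)
    then have "\<rho> * measure lebesgue U < \<rho> * (b - a)" using U(4) by simp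
    also have "\<dots> = measure lebesgue E" using a_less_b by (simp add: \<rho>_def)
    finally show False using \<open>measure lebesgue E \<le> \<rho> * measure lebesgue U\<close> by simp
  qed
  then show ?thesis using E by (simp add: E_def negligible_iff_measure0)
qed

end

theorem theorem3p3:
  fixes n k :: nat and p lam :: "nat \<Rightarrow> real" and X :: "real set"
  assumes "\<exists>i\<in>{0..n}. \<exists>j\<in>{0..n}. p i \<noteq> p j"
    and "k \<ge> 1"
    and "\<forall>i\<in>{0..n}. 0 < lam i \<and> lam i < 1"
    and "(\<Prod>i\<in>{0..n}. lam i ^ (k * (n + 1) ^ (k - 1))) \<ge> 1 / 2"
    and "X \<noteq> {}" and "compact X"
    and "X = (\<Union>i\<in>{0..n}. ifs_map lam p i ` X)"
  shows "(\<exists>U. openin (top_of_set X) U \<and> X \<subseteq> closure U \<and> U \<subseteq> Xk_set n k (ifs_map lam p) X)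
         \<and> (AE x in lebesgue. x \<in> X \<longrightarrow> x \<in> Xk_set n k (ifs_map lam p) X)"
proof -
  interpret ifs_large_ratios n p lam k
    by unfold_locales (use assms in auto)
  have X: "X = {a..b}" using attractor_eq_ab[OF assms(6,5)] assms(7) by (simp add: S_def)
  have G_Xk: "G \<subseteq> Xk_set n k (ifs_map lam p) X"
  proof
    fix x assume x: "x \<in> G"
    obtain c where "\<And>j. c j \<le> n" "k_simply_normal n k c" "(\<lambda>j. comp_prefix S c j 0) \<longlonglongrightarrow> x"
      using G_coded_normally[OF x] by blast
    then show "x \<in> Xk_set n k (ifs_map lam p) X"
      using x G_subset_ab X by (auto simp: Xk_set_def S_def)
  qed
  have "openin (top_of_set X) G" using open_G G_subset_ab X by (auto simp: openin_open)
  moreover have "AE x in lebesgue. x \<in> X \<longrightarrow> x \<in> Xk_set n k (ifs_map lam p) X"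
    using negligible_ab_minus_G G_Xk X
    by (intro AE_I'[of "{a..b} - G"]) (auto simp: negligible_iff_null_sets)
  ultimately show ?thesis using ab_subset_closure_G G_Xk X by blast
qed

end
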